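(* Let $\alpha\in(0,1)$ and $\nu\in\mathbb{N}$, and let $K_{\alpha,\nu}:\mathbb{R}\to\mathbb{R}$ be defined by \[ K_{\alpha,\nu}(x)=\sum_{k=0}^{\infty}2^{-2\alpha\nu k}\,\phi(2^{2\nu k}x), \] where $\phi:\mathbb{R}\to[0,1]$ is the $2$-periodic sawtooth function with $\phi(x)=|x|$ for $x\in[-1,1]$ and $\phi(x+2)=\phi(x)$ for all $x$. (i) $K_{\alpha,\nu}\in C^{0,\alpha}(\mathbb{R})$ for every $\nu\in\mathbb{N}$. Moreover $0\le K_{\alpha,\nu}\le 1/(1-2^{-2\nu\alpha})$, and for all $x,y\in\mathbb{R}$ with $|x-y|\le 2$, \[ |K_{\alpha,\nu}(x)-K_{\alpha,\nu}(y)|\le C(\alpha,\nu)\,|x-y|^{\alpha},\qquad C(\alpha,\nu):=\frac{1}{1-2^{-2\nu(1-\alpha)}}+\frac{2}{2^{2\nu(\alpha-1)}-2^{-2\nu}}. \] (ii) If $2\nu>1/(1-\alpha)$, then $K_{\alpha,\nu}$ is at no point of $\mathbb{R}$ pointwise H\"older continuous of order $\beta$, for any $\beta\in(\alpha,1]$. Moreover, for every $x\in\mathbb{R}$, every $m\in\mathbb{N}$ and every $\beta\in(\alpha,1]$, \[ \frac{|K_{\alpha,\nu}(x+t_m(x))-K_{\alpha,\nu}(x)|}{|t_m(x)|^{\beta}}\ \ge\ K(m,\nu,\alpha,\beta):=\frac{2^{\beta-1}\big(2^{2\nu(1-\alpha)}-2\big)}{2^{2\nu(1-\alpha)}-1}\big(2^{2\nu(\beta-\alpha)}\big)^{m},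 \] where $t_m:\mathbb{R}\to\{\pm 2^{-2\nu m-1}\}$ is the step function \[ t_m(x)=2^{-2\nu m-1}\sum_{i=-\infty}^{+\infty}\Big[\chi_{(i,i+\frac12]}(2^{2\nu m}x)-\chi_{(i+\frac12,i+1]}(2^{2\nu m}x)\Big], \] i.e. $t_m(x)=+2^{-2\nu m-1}$ if $i2^{-2\nu m}<x\le i2^{-2\nu m}+2^{-2\nu m-1}$ for some $i\in\mathbb{Z}$, and $t_m(x)=-2^{-2\nu m-1}$ if $i2^{-2\nu m}+2^{-2\nu m-1}<x\le (i+1)2^{-2\nu m}$ for some $i\in\mathbb{Z}$.
   Context: A function $f\in C^0(\mathbb{R})$ is called (pointwise) H\"older continuous of order $\beta$ ($C^{0,\beta}$) at $x\in\mathbb{R}$ if there exist $r,C>0$ such that $|f(y)-f(x)|\le C|y-x|^{\beta}$ for all $y\in[x-r,x+r]$. $\chi_A$ denotes the indicator function of a set $A$. *)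

theory Defs
  imports "HOL-Analysis.Analysis"
begin

(* 2-periodic sawtooth: phi x = |x| on [-1,1], phi (x+2) = phi x *)
definition saw :: "real \<Rightarrow> real" where
  "saw x = \<bar>x - 2 * of_int \<lfloor>(x + 1) / 2\<rfloor>\<bar>"

definition Kfun :: "real \<Rightarrow> nat \<Rightarrow> real \<Rightarrow> real" where
  "Kfun \<alpha> \<nu> x = (\<Sum>k. 2 powr (- 2 * \<alpha> * real \<nu> * real k) * saw (2 ^ (2 * \<nu> * k) * x))"

definition holder_at :: "(real \<Rightarrow> real) \<Rightarrow> real \<Rightarrow> real \<Rightarrow> bool" where
  "holder_at f \<beta> x \<longleftrightarrow> (\<exists>r>0. \<exists>C>0. \<forall>y\<in>{x - r..x + r}. \<bar>f y - f x\<bar> \<le> C * \<bar>y - x\<bar> powr \<beta>)"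

definition Cconst :: "real \<Rightarrow> nat \<Rightarrow> real" where
  "Cconst \<alpha> \<nu> = 1 / (1 - 2 powr (- 2 * real \<nu> * (1 - \<alpha>)))
     + 2 / (2 powr (2 * real \<nu> * (\<alpha> - 1)) - 2 powr (- 2 * real \<nu>))"

definition Kconst :: "nat \<Rightarrow> nat \<Rightarrow> real \<Rightarrow> real \<Rightarrow> real" where
  "Kconst m \<nu> \<alpha> \<beta> = 2 powr (\<beta> - 1) * (2 powr (2 * real \<nu> * (1 - \<alpha>)) - 2)
     / (2 powr (2 * real \<nu> * (1 - \<alpha>)) - 1) * (2 powr (2 * real \<nu> * (\<beta> - \<alpha>))) ^ m"

definition tm :: "nat \<Rightarrow> nat \<Rightarrow> real \<Rightarrow> real" where
  "tm \<nu> m x =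
    (let h = 2 powr (- 2 * real \<nu> * real m) in
     if \<exists>i::int. of_int i * h < x \<and> x \<le> of_int i * h + h / 2 then h / 2
     else if \<exists>i::int. of_int i * h + h / 2 < x \<and> x \<le> (of_int i + 1) * h then - (h / 2)
     else 0)"

end

theory Submission
  imports Defs
begin

text \<open>
  K is the lacunary series \<open>\<Sum>k. a^k * saw (b^k * x)\<close> with \<open>b = 4^\<nu>\<close> and
  \<open>a = b powr -\<alpha>\<close>. Splitting an increment at the scale N where \<open>b^N * \<bar>x - y\<bar>\<close> first
  exceeds 1, the terms below N are controlled by the Lipschitz bound of saw and those above by
  \<open>saw \<le> 1\<close>; both parts are \<open>O(\<bar>x - y\<bar> powr \<alpha>)\<close>.

  Conversely, x and \<open>x + t\<close> with \<open>t = tm \<nu> m x\<close> lie on one linear piece of \<open>saw (b^m * _)\<close>,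
  so the m-th term moves by exactly \<open>(a * b)^m * \<bar>t\<bar>\<close>; every finer term is unchanged because
  \<open>b^k * t\<close> is an even integer for \<open>k > m\<close>, and the coarser terms add up to at most
  \<open>(\<Sum>k<m. (a * b)^k) * \<bar>t\<bar>\<close>. Once \<open>a * b = 2 powr (2 * \<nu> * (1 - \<alpha>)) > 2\<close> the m-th
  term dominates, and \<open>(a * b)^m * \<bar>t\<bar>\<close> is of order \<open>\<bar>t\<bar> powr \<alpha>\<close>, which is not
  \<open>O(\<bar>t\<bar> powr \<beta>)\<close> for \<open>\<beta> > \<alpha>\<close> as \<open>m \<rightarrow> \<infinity>\<close>.
\<close>

lemma powr_power_swap: "0 < b \<Longrightarrow> (b powr c) ^ n = (b ^ n) powr c"
  for b :: real
  by (simp add: powr_power powr_powr powr_realpow[symmetric] mult.commute)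

lemma geometric_sum_le:
  fixes q :: real
  assumes "1 < q"
  shows "(\<Sum>k<Suc n. q ^ k) \<le> q ^ n / (1 - 1 / q)"
proof -
  have "(\<Sum>k<Suc n. q ^ k) = (q ^ Suc n - 1) / (q - 1)"
    using assms by (simp add: sum_gp_strict field_simps)
  also have "\<dots> \<le> q ^ Suc n / (q - 1)"
    using assms by (simp add: divide_right_mono)
  also have "\<dots> = q ^ n / (1 - 1 / q)"
    using assms by (simp add: field_simps)
  finally show ?thesis .
qed

lemma geometric_sum_lower:
  fixes q :: real
  assumes "1 < q"
  shows "q ^ m * (q - 2) / (q - 1) \<le> q ^ m - (\<Sum>k<m. q ^ k)"
proof -
  have "q ^ m - (\<Sum>k<m. q ^ k) = q ^ m * (q - 2) / (q - 1) + 1 / (q - 1)"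
    using assms by (simp add: sum_gp_strict field_simps)
  then show ?thesis
    using assms by simp
qed

section \<open>H\<ouml>lder continuity\<close>

lemma continuous_on_if_holder:
  fixes f :: "real \<Rightarrow> real"
  assumes "0 < \<alpha>" "\<And>x y. \<bar>f x - f y\<bar> \<le> C * \<bar>x - y\<bar> powr \<alpha>"
  shows "continuous_on UNIV f"
proof -
  have "isCont f x" for x
  proof -
    have "((\<lambda>y. C * \<bar>y - x\<bar> powr \<alpha>) \<longlongrightarrow> 0) (at x)"
      using assms(1)
      by (intro tendsto_mult_right_zero tendsto_zero_powrI tendsto_rabs_zero LIM_zero tendsto_ident_at)
        auto
    then have "((\<lambda>y. f y - f x) \<longlongrightarrow> 0) (at x)"
      by (rule Lim_null_comparison[rotated]) (simp add: assms(2))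
    then show ?thesis
      unfolding isCont_def by (rule LIM_zero_cancel)
  qed
  then show ?thesis
    by (simp add: continuous_on_eq_continuous_at)
qed

lemma not_holder_at_if_ratio_unbounded:
  assumes "t \<longlonglongrightarrow> 0" "\<And>m. t m \<noteq> 0" "0 < c" "1 < P"
    and ratio: "\<And>m. c * P ^ m \<le> \<bar>f (x + t m) - f x\<bar> / \<bar>t m\<bar> powr \<beta>"
  shows "\<not> holder_at f \<beta> x"
proof
  assume "holder_at f \<beta> x"
  then obtain r C where "0 < r"
    and holder: "\<And>y. y \<in> {x - r..x + r} \<Longrightarrow> \<bar>f y - f x\<bar> \<le> C * \<bar>y - x\<bar> powr \<beta>"
    unfolding holder_at_def by blast
  obtain m1 where m1: "C / c < P ^ m1"
    using real_arch_pow[OF assms(4)] by blast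
  obtain m2 where m2: "\<And>m. m2 \<le> m \<Longrightarrow> \<bar>t m\<bar> < r"
    using LIMSEQ_D[OF assms(1) \<open>0 < r\<close>] by auto
  define m where "m = max m1 m2"
  have "P ^ m1 \<le> P ^ m"
    using assms(4) by (intro power_increasing) (auto simp: m_def)
  then have "c * P ^ m1 \<le> c * P ^ m"
    using assms(3) by simp
  moreover have "C < c * P ^ m1"
    using m1 assms(3) by (simp add: divide_less_eq mult.commute)
  ultimately have "C < c * P ^ m"
    by linarith
  moreover have "\<bar>f (x + t m) - f x\<bar> \<le> C * \<bar>t m\<bar> powr \<beta>"
    using holder[of "x + t m"] m2[of m] by (simp add: m_def abs_less_iff)
  then have "\<bar>f (x + t m) - f x\<bar> / \<bar>t m\<bar> powr \<beta> \<le> C"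
    using assms(2) by (simp add: divide_le_eq)
  ultimately show False
    using ratio[of m] by linarith
qed

section \<open>The sawtooth function\<close>

lemma saw_floor_bounds:
  "-1 \<le> x - 2 * of_int \<lfloor>(x + 1) / 2\<rfloor>" "x - 2 * of_int \<lfloor>(x + 1) / 2\<rfloor> < 1"
proof -
  have "of_int \<lfloor>(x + 1) / 2\<rfloor> \<le> (x + 1) / 2" "(x + 1) / 2 < of_int \<lfloor>(x + 1) / 2\<rfloor> + 1"
    by linarith+
  then show "-1 \<le> x - 2 * of_int \<lfloor>(x + 1) / 2\<rfloor>" "x - 2 * of_int \<lfloor>(x + 1) / 2\<rfloor> < 1"
    by (simp_all add: field_simps)
qed

lemma saw_nonneg: "0 \<le> saw x"
  unfolding saw_def by simp

lemma saw_le_one: "saw x \<le> 1"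
  using saw_floor_bounds[of x] unfolding saw_def by auto

lemma saw_le_dist_even: "saw x \<le> \<bar>x - 2 * of_int n\<bar>"
proof -
  define f where "f = \<lfloor>(x + 1) / 2\<rfloor>"
  have "-1 \<le> x - 2 * of_int f" "x - 2 * of_int f < 1"
    using saw_floor_bounds[of x] by (simp_all add: f_def)
  moreover have "n = f \<or> real_of_int n \<ge> of_int f + 1 \<or> real_of_int n \<le> of_int f - 1"
    by linarith
  ultimately show ?thesis
    unfolding saw_def f_def[symmetric] by auto
qed

lemma saw_lipschitz: "\<bar>saw x - saw y\<bar> \<le> \<bar>x - y\<bar>"
  using saw_le_dist_even[of x "\<lfloor>(y + 1) / 2\<rfloor>"] saw_le_dist_even[of y "\<lfloor>(x + 1) / 2\<rfloor>"]
  unfolding saw_def by linarith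

lemma saw_periodic: "saw (x + 2 * of_int n) = saw x"
proof -
  have "(x + 2 * of_int n + 1) / 2 = (x + 1) / 2 + of_int n"
    by (simp add: field_simps)
  then have "\<lfloor>(x + 2 * of_int n + 1) / 2\<rfloor> = \<lfloor>(x + 1) / 2\<rfloor> + n"
    by (metis floor_add_int)
  then show ?thesis
    unfolding saw_def by simp
qed

lemma saw_eq_dist_even:
  assumes "\<bar>x - 2 * of_int n\<bar> \<le> 1"
  shows "saw x = \<bar>x - 2 * of_int n\<bar>"
proof (cases "x - 2 * of_int n = 1")
  case True
  then have "(x + 1) / 2 = of_int (n + 1)"
    by (simp add: field_simps)
  then have "\<lfloor>(x + 1) / 2\<rfloor> = n + 1"
    by (metis floor_of_int)
  then show ?thesis
    unfolding saw_def using True by simp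
next
  case False
  then have "\<lfloor>(x + 1) / 2\<rfloor> = n"
    using assms by (auto simp: floor_eq_iff field_simps abs_if split: if_splits)
  then show ?thesis
    unfolding saw_def by simp
qed

lemma saw_isometric_on_unit_interval:
  assumes "of_int i \<le> u" "u \<le> of_int i + 1" "of_int i \<le> v" "v \<le> of_int i + 1"
  shows "\<bar>saw u - saw v\<bar> = \<bar>u - v\<bar>"
proof -
  obtain n where "i = 2 * n \<or> i = 2 * n - 1"
    by (metis add_diff_cancel_right' evenE oddE)
  then have "saw u = \<bar>u - 2 * of_int n\<bar> \<and> saw v = \<bar>v - 2 * of_int n\<bar>"
    using assms by (auto intro!: saw_eq_dist_even)
  then show ?thesis
    using \<open>i = 2 * n \<or> i = 2 * n - 1\<close> assms by auto
qed

section \<open>Lacunary sawtooth series\<close>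

definition saw_series :: "real \<Rightarrow> real \<Rightarrow> real \<Rightarrow> real" where
  "saw_series a b x = (\<Sum>k. a ^ k * saw (b ^ k * x))"

lemma summable_saw_series:
  assumes "0 \<le> a" "a < 1"
  shows "summable (\<lambda>k. a ^ k * saw (b ^ k * x))"
proof (rule summable_comparison_test)
  show "\<exists>N. \<forall>k\<ge>N. norm (a ^ k * saw (b ^ k * x)) \<le> a ^ k"
    using assms saw_nonneg saw_le_one by (auto intro!: mult_left_le)
  show "summable (\<lambda>k. a ^ k)"
    using assms by simp
qed

lemma saw_series_nonneg: "0 \<le> a \<Longrightarrow> a < 1 \<Longrightarrow> 0 \<le> saw_series a b x"
  unfolding saw_series_def
  by (intro suminf_nonneg summable_saw_series) (auto intro!: mult_nonneg_nonneg saw_nonneg)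

lemma saw_series_le:
  assumes "0 \<le> a" "a < 1"
  shows "saw_series a b x \<le> 1 / (1 - a)"
proof -
  have "saw_series a b x \<le> (\<Sum>k. a ^ k)"
    unfolding saw_series_def using assms saw_le_one
    by (intro suminf_le summable_saw_series) (auto intro!: mult_left_le)
  also have "\<dots> = 1 / (1 - a)"
    using assms by (simp add: suminf_geometric)
  finally show ?thesis .
qed

lemma saw_series_diff_sums:
  assumes "0 \<le> a" "a < 1"
  shows "(\<lambda>k. a ^ k * (saw (b ^ k * x) - saw (b ^ k * y))) sums (saw_series a b x - saw_series a b y)"
  unfolding saw_series_def right_diff_distrib
  using assms by (intro sums_diff summable_sums summable_saw_series)

lemma saw_series_diff_le:
  assumes "0 \<le> a" "a < 1" "0 \<le> b"
  shows "\<bar>saw_series a b x - saw_series a b y\<bar> \<le> \<bar>x - y\<bar> * (\<Sum>k<N. (a * b) ^ k) + a ^ N / (1 - a)"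
proof -
  define D where "D k = a ^ k * (saw (b ^ k * x) - saw (b ^ k * y))" for k
  have D_le_weight: "\<bar>D k\<bar> \<le> a ^ k" for k
  proof -
    have "\<bar>saw (b ^ k * x) - saw (b ^ k * y)\<bar> \<le> 1"
      using saw_nonneg[of "b ^ k * x"] saw_le_one[of "b ^ k * x"]
        saw_nonneg[of "b ^ k * y"] saw_le_one[of "b ^ k * y"] by linarith
    then show ?thesis
      unfolding D_def abs_mult using assms by (simp add: mult_left_le)
  qed
  have "\<bar>D k\<bar> \<le> a ^ k * \<bar>b ^ k * x - b ^ k * y\<bar>" for k
    unfolding D_def abs_mult using assms by (simp add: mult_left_mono saw_lipschitz)
  moreover have "a ^ k * \<bar>b ^ k * x - b ^ k * y\<bar> = \<bar>x - y\<bar> * (a * b) ^ k" for k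
    using assms by (simp add: abs_mult power_mult_distrib flip: right_diff_distrib)
  ultimately have D_le_lipschitz: "\<bar>D k\<bar> \<le> \<bar>x - y\<bar> * (a * b) ^ k" for k
    by metis
  have geom: "summable (\<lambda>k. a ^ k)"
    using assms by simp
  have abs_summable: "summable (\<lambda>k. \<bar>D k\<bar>)"
    by (rule summable_comparison_test[OF _ geom]) (use D_le_weight in auto)
  have "\<bar>saw_series a b x - saw_series a b y\<bar> = \<bar>\<Sum>k. D k\<bar>"
    using saw_series_diff_sums[OF assms(1,2)] unfolding D_def by (simp add: sums_iff)
  also have "\<dots> \<le> (\<Sum>k. \<bar>D k\<bar>)"
    by (rule summable_rabs[OF abs_summable])
  also have "\<dots> = (\<Sum>k. \<bar>D (k + N)\<bar>) + (\<Sum>k<N. \<bar>D k\<bar>)"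
    by (rule suminf_split_initial_segment[OF abs_summable])
  also have "(\<Sum>k. \<bar>D (k + N)\<bar>) \<le> (\<Sum>k. a ^ N * a ^ k)"
    using D_le_weight
    by (intro suminf_le summable_ignore_initial_segment[OF abs_summable] summable_mult geom)
      (metis power_add mult.commute)
  also have "\<dots> = a ^ N / (1 - a)"
    using assms by (simp add: suminf_mult[OF geom] suminf_geometric)
  also have "(\<Sum>k<N. \<bar>D k\<bar>) \<le> \<bar>x - y\<bar> * (\<Sum>k<N. (a * b) ^ k)"
    unfolding sum_distrib_left by (intro sum_mono D_le_lipschitz)
  finally show ?thesis
    by simp
qed

lemma scale_weight_le_powr:
  fixes b h :: real
  assumes "1 < b" "0 \<le> \<alpha>" "0 < h" "1 < b ^ N * h"
  shows "(b powr - \<alpha>) ^ N \<le> h powr \<alpha>"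
proof -
  have "(b powr - \<alpha>) ^ N = (b ^ N) powr - \<alpha>"
    using assms(1) by (intro powr_power_swap) auto
  also have "\<dots> = 1 / (b ^ N) powr \<alpha>"
    by (rule powr_minus_divide)
  also have "\<dots> \<le> h powr \<alpha>"
  proof -
    have "1 \<le> (b ^ N * h) powr \<alpha>"
      using assms by (intro ge_one_powr_ge_zero) auto
    then show ?thesis
      using assms by (simp add: powr_mult divide_le_eq mult.commute)
  qed
  finally show ?thesis .
qed

lemma scale_geometric_sum_le_powr:
  fixes b h :: real
  assumes "1 < b" "\<alpha> < 1" "0 < h" "\<And>n. n < N \<Longrightarrow> b ^ n * h \<le> 1"
  shows "h * (\<Sum>k<N. (b powr (1 - \<alpha>)) ^ k) \<le> h powr \<alpha> / (1 - b powr (\<alpha> - 1))"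
proof (cases N)
  case 0
  have "b powr (\<alpha> - 1) < 1"
    using assms by (intro powr_less_one) auto
  then show ?thesis
    using 0 by simp
next
  case (Suc n)
  define q where "q = b powr (1 - \<alpha>)"
  have q_gt_1: "1 < q"
    using powr_less_mono[of 0 "1 - \<alpha>" b] assms by (simp add: q_def)
  have "h * q ^ n = h powr \<alpha> * (h * b ^ n) powr (1 - \<alpha>)"
    using assms by (simp add: q_def powr_power_swap powr_mult powr_add[symmetric] mult.commute)
  also have "\<dots> \<le> h powr \<alpha>"
    using assms(4)[of n] Suc assms by (intro mult_left_le powr_le1) (auto simp: mult.commute)
  finally have "h * q ^ n / (1 - 1 / q) \<le> h powr \<alpha> / (1 - 1 / q)"
    using q_gt_1 by (intro divide_right_mono) auto
  moreover have "h * (\<Sum>k<N. q ^ k) \<le> h * q ^ n / (1 - 1 / q)"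
    using geometric_sum_le[OF q_gt_1, of n] assms(3) Suc
    by (simp add: mult_left_mono times_divide_eq_right[symmetric] del: times_divide_eq_right)
  moreover have "b powr (\<alpha> - 1) = 1 / q"
    by (simp add: q_def powr_minus_divide[symmetric])
  ultimately show ?thesis
    by (simp add: q_def)
qed

lemma saw_series_holder:
  assumes "1 < b" "0 < \<alpha>" "\<alpha> < 1"
  shows "\<bar>saw_series (b powr - \<alpha>) b x - saw_series (b powr - \<alpha>) b y\<bar>
    \<le> (1 / (1 - b powr (\<alpha> - 1)) + 1 / (1 - b powr - \<alpha>)) * \<bar>x - y\<bar> powr \<alpha>"
proof (cases "x = y")
  case True
  then show ?thesis
    by simp
next
  case False
  define h where "h = \<bar>x - y\<bar>"
  define a where "a = b powr - \<alpha>"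
  have h_pos: "0 < h"
    using False by (simp add: h_def)
  have a_pos: "0 < a" and a_less_1: "a < 1"
    using powr_less_mono[of "- \<alpha>" 0 b] assms by (simp_all add: a_def)
  have ab: "a * b = b powr (1 - \<alpha>)"
    using powr_add[of b "- \<alpha>" 1] assms by (simp add: a_def)
  have "\<exists>n. 1 < b ^ n * h"
    using real_arch_pow[OF assms(1), of "1 / h"] h_pos by (auto simp: field_simps)
  then obtain N where N_large: "1 < b ^ N * h" and N_least: "\<And>n. n < N \<Longrightarrow> b ^ n * h \<le> 1"
    unfolding exists_least_iff[of "\<lambda>n. 1 < b ^ n * h"] by (auto simp: not_less)
  \<comment> \<open>Below the scale N the Lipschitz bound of saw is used, above it the bound saw \<le> 1.\<close>
  have "\<bar>saw_series a b x - saw_series a b y\<bar> \<le> h * (\<Sum>k<N. (a * b) ^ k) + a ^ N / (1 - a)"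
    using saw_series_diff_le[of a b x y N] a_pos a_less_1 assms by (simp add: h_def)
  also have "\<dots> \<le> h powr \<alpha> / (1 - b powr (\<alpha> - 1)) + h powr \<alpha> / (1 - a)"
  proof (intro add_mono divide_right_mono)
    show "h * (\<Sum>k<N. (a * b) ^ k) \<le> h powr \<alpha> / (1 - b powr (\<alpha> - 1))"
      unfolding ab using assms(1,3) h_pos N_least by (rule scale_geometric_sum_le_powr)
    show "a ^ N \<le> h powr \<alpha>"
      unfolding a_def using assms h_pos N_large by (intro scale_weight_le_powr) auto
  qed (use a_less_1 in auto)
  finally show ?thesis
    by (simp add: a_def h_def distrib_right)
qed

text \<open>Divisibility by 4 makes \<open>n^k * s / n^m\<close> an even integer, a period of saw, for \<open>k > m\<close>.\<close>

lemma saw_shift_invisible: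
  fixes n :: nat
  assumes "4 dvd n" "0 < n" "m < k" "\<bar>s\<bar> = 1 / 2"
  shows "saw (real n ^ k * (x + s / real n ^ m)) = saw (real n ^ k * x)"
proof -
  have "4 dvd n ^ (k - m)"
    using assms(1,3) by (meson dvd_power dvd_trans zero_less_diff)
  then obtain r where r: "n ^ (k - m) = 4 * r"
    by blast
  have "real n ^ k = real n ^ (k - m) * real n ^ m"
    using assms(3) by (simp flip: power_add)
  moreover have "real n ^ (k - m) = 4 * real r"
    using arg_cong[OF r, of real] by simp
  ultimately have "real n ^ k * (s / real n ^ m) = 4 * real r * s"
    using assms(2) by simp
  also have "\<dots> = 2 * of_int (if s = 1 / 2 then int r else - int r)"
  proof -
    have "s = 1 / 2 \<or> s = - 1 / 2"
      using assms(4) by linarith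
    then show ?thesis
      by auto
  qed
  finally show ?thesis
    by (simp add: distrib_left saw_periodic)
qed

lemma saw_series_increment_ge:
  fixes n :: nat and i :: int and a :: real
  assumes "4 dvd n" "0 < n" "0 \<le> a" "a < 1" "\<bar>s\<bar> = 1 / 2"
    and "of_int i \<le> real n ^ m * x" "real n ^ m * x \<le> of_int i + 1"
    and "of_int i \<le> real n ^ m * x + s" "real n ^ m * x + s \<le> of_int i + 1"
  shows "\<bar>s\<bar> / real n ^ m * ((a * real n) ^ m - (\<Sum>k<m. (a * real n) ^ k))
    \<le> \<bar>saw_series a n (x + s / real n ^ m) - saw_series a n x\<bar>"
proof -
  define b where "b = real n"
  define t where "t = s / b ^ m"
  define D where "D k = a ^ k * (saw (b ^ k * (x + t)) - saw (b ^ k * x))" for k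
  have b_pos: "0 < b"
    using assms(2) by (simp add: b_def)
  have "D sums (\<Sum>k<Suc m. D k)"
    using saw_shift_invisible[OF assms(1,2) _ assms(5)]
    by (intro sums_finite) (auto simp: D_def b_def t_def)
  then have increment: "saw_series a b (x + t) - saw_series a b x = D m + (\<Sum>k<m. D k)"
    using saw_series_diff_sums[OF assms(3,4)] unfolding D_def by (simp add: sums_iff)
  have "b ^ m * (x + t) = b ^ m * x + s"
    using b_pos by (simp add: t_def distrib_left)
  then have "\<bar>saw (b ^ m * (x + t)) - saw (b ^ m * x)\<bar> = \<bar>s\<bar>"
    using saw_isometric_on_unit_interval[of i "b ^ m * x + s" "b ^ m * x"] assms(6-9)
    by (simp add: b_def)
  also have "\<bar>s\<bar> = b ^ m * \<bar>t\<bar>"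
    using b_pos by (simp add: t_def abs_divide)
  finally have D_m: "\<bar>D m\<bar> = (a * b) ^ m * \<bar>t\<bar>"
    using assms(3) by (simp add: D_def abs_mult power_mult_distrib)
  have "\<bar>D k\<bar> \<le> (a * b) ^ k * \<bar>t\<bar>" for k
  proof -
    have "\<bar>D k\<bar> \<le> a ^ k * \<bar>b ^ k * (x + t) - b ^ k * x\<bar>"
      unfolding D_def abs_mult using assms(3) by (simp add: mult_left_mono saw_lipschitz)
    also have "\<dots> = (a * b) ^ k * \<bar>t\<bar>"
      using assms(3) b_pos by (simp add: abs_mult power_mult_distrib distrib_left)
    finally show ?thesis .
  qed
  then have "\<bar>\<Sum>k<m. D k\<bar> \<le> \<bar>t\<bar> * (\<Sum>k<m. (a * b) ^ k)"
    unfolding sum_distrib_left by (intro sum_abs[THEN order_trans] sum_mono) (simp add: mult.commute)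
  then have "\<bar>t\<bar> * ((a * b) ^ m - (\<Sum>k<m. (a * b) ^ k)) \<le> \<bar>D m + (\<Sum>k<m. D k)\<bar>"
    using D_m by (simp add: right_diff_distrib mult.commute)
  then show ?thesis
    using increment by (simp add: b_def t_def)
qed

section \<open>The function K\<close>

lemma four_pow_powr: "((4::real) ^ \<nu>) powr x = 2 powr (2 * real \<nu> * x)"
proof -
  have "(4::real) ^ \<nu> = 2 powr real (2 * \<nu>)"
    by (subst powr_realpow) (simp_all add: power_mult)
  then show ?thesis
    by (simp add: powr_powr)
qed

lemma four_pow_powr_uminus: "(4 ^ \<nu>) powr - \<alpha> = 2 powr (- 2 * real \<nu> * \<alpha>)"
  by (simp add: four_pow_powr)

lemma two_powr_eq_inverse_four_pow: "2 powr (- 2 * real \<nu> * real m) = 1 / (4 ^ \<nu>) ^ m"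
  using four_pow_powr[of \<nu> "- real m"]
  by (simp add: powr_minus_divide powr_realpow[symmetric] powr_powr)

lemma Kfun_eq_saw_series: "Kfun \<alpha> \<nu> = saw_series ((4 ^ \<nu>) powr - \<alpha>) (4 ^ \<nu>)"
proof -
  have "2 powr (- 2 * \<alpha> * real \<nu> * real k) = ((4 ^ \<nu>) powr - \<alpha>) ^ k" for k
    by (simp add: four_pow_powr powr_power ac_simps)
  moreover have "(2::real) ^ (2 * \<nu> * k) = (4 ^ \<nu>) ^ k" for k
    by (simp add: power_mult)
  ultimately show ?thesis
    unfolding Kfun_def saw_series_def by simp
qed

lemma tm_cases:
  obtains i :: int and s :: real
  where "\<bar>s\<bar> = 1 / 2" "tm \<nu> m x = s / (4 ^ \<nu>) ^ m"
    and "of_int i \<le> (4 ^ \<nu>) ^ m * x" "(4 ^ \<nu>) ^ m * x \<le> of_int i + 1"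
    and "of_int i \<le> (4 ^ \<nu>) ^ m * x + s" "(4 ^ \<nu>) ^ m * x + s \<le> of_int i + 1"
proof -
  define h :: real where "h = 2 powr (- 2 * real \<nu> * real m)"
  have h_pos: "0 < h"
    by (simp add: h_def)
  have scaled: "(4 ^ \<nu>) ^ m * x = x / h"
    unfolding h_def two_powr_eq_inverse_four_pow by simp
  have tm_eq: "tm \<nu> m x = (if \<exists>i::int. of_int i * h < x \<and> x \<le> of_int i * h + h / 2 then h / 2
      else if \<exists>i::int. of_int i * h + h / 2 < x \<and> x \<le> (of_int i + 1) * h then - (h / 2) else 0)"
    by (simp add: tm_def h_def Let_def)
  show ?thesis
  proof (cases "\<exists>i::int. of_int i * h < x \<and> x \<le> of_int i * h + h / 2")
    case True
    then obtain i :: int where "of_int i * h < x" "x \<le> of_int i * h + h / 2"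
      by blast
    then have "of_int i < x / h" "x / h \<le> of_int i + 1 / 2"
      using h_pos by (simp_all add: field_simps)
    moreover have "tm \<nu> m x = (1 / 2) / (4 ^ \<nu>) ^ m"
      using True unfolding tm_eq h_def two_powr_eq_inverse_four_pow by simp
    ultimately show ?thesis
      using that[of "1 / 2" i] by (simp add: scaled)
  next
    case False
    define i where "i = \<lceil>x / h\<rceil> - 1"
    have i: "of_int i < x / h" "x / h \<le> of_int i + 1"
      unfolding i_def by linarith+
    have "\<not> x / h \<le> of_int i + 1 / 2"
    proof
      assume "x / h \<le> of_int i + 1 / 2"
      then have "of_int i * h < x \<and> x \<le> of_int i * h + h / 2"
        using i h_pos by (simp add: field_simps)
      then show False
        using False by blast
    qed
    then have upper_half: "of_int i + 1 / 2 < x / h"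
      by simp
    then have "of_int i * h + h / 2 < x \<and> x \<le> (of_int i + 1) * h"
      using i h_pos by (simp add: field_simps)
    then have "tm \<nu> m x = (- 1 / 2) / (4 ^ \<nu>) ^ m"
      using False unfolding tm_eq h_def two_powr_eq_inverse_four_pow by auto
    then show ?thesis
      using that[of "- 1 / 2" i] i upper_half by (simp add: scaled)
  qed
qed

lemma Kfun_bounds:
  assumes "0 < \<alpha>" "1 \<le> \<nu>"
  shows "0 \<le> Kfun \<alpha> \<nu> x" "Kfun \<alpha> \<nu> x \<le> 1 / (1 - 2 powr (- 2 * real \<nu> * \<alpha>))"
proof -
  have "2 powr (- 2 * real \<nu> * \<alpha>) < 1"
    using assms by (intro powr_less_one) auto
  then show "0 \<le> Kfun \<alpha> \<nu> x" "Kfun \<alpha> \<nu> x \<le> 1 / (1 - 2 powr (- 2 * real \<nu> * \<alpha>))"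
    unfolding Kfun_eq_saw_series four_pow_powr_uminus
    by (simp_all add: saw_series_nonneg saw_series_le)
qed

lemma holder_const_le_Cconst:
  assumes "0 < \<alpha>" "\<alpha> < 1" "1 \<le> \<nu>"
  shows "1 / (1 - (4 ^ \<nu>) powr (\<alpha> - 1)) + 1 / (1 - (4 ^ \<nu>) powr - \<alpha>) \<le> Cconst \<alpha> \<nu>"
proof -
  define p :: real where "p = 2 powr (2 * real \<nu> * (\<alpha> - 1))"
  define e :: real where "e = 2 powr (- 2 * real \<nu>)"
  have p_eq: "(4 ^ \<nu>) powr (\<alpha> - 1) = p" "2 powr (- 2 * real \<nu> * (1 - \<alpha>)) = p"
    by (simp_all add: p_def four_pow_powr algebra_simps)
  have weight_eq: "(4 ^ \<nu>) powr - \<alpha> = e / p"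
    by (simp add: four_pow_powr e_def p_def powr_diff[symmetric] algebra_simps)
  have "e < p"
    using assms by (simp add: e_def p_def algebra_simps)
  moreover have "p < 1"
    using assms by (simp add: p_def powr_less_one mult_pos_neg)
  moreover have "0 < e"
    by (simp add: e_def)
  ultimately have "1 / (1 - (4 ^ \<nu>) powr - \<alpha>) = p / (p - e)" "p / (p - e) \<le> 2 / (p - e)"
    by (simp add: weight_eq field_simps, simp add: divide_right_mono)
  then show ?thesis
    unfolding Cconst_def p_eq by (simp add: e_def p_def)
qed

lemma Kfun_holder:
  assumes "0 < \<alpha>" "\<alpha> < 1" "1 \<le> \<nu>"
  shows "\<bar>Kfun \<alpha> \<nu> x - Kfun \<alpha> \<nu> y\<bar> \<le> Cconst \<alpha> \<nu> * \<bar>x - y\<bar> powr \<alpha>"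
proof -
  have "(1::real) < 4 ^ \<nu>"
    using assms(3) by (simp add: one_less_power)
  then have "\<bar>Kfun \<alpha> \<nu> x - Kfun \<alpha> \<nu> y\<bar>
      \<le> (1 / (1 - (4 ^ \<nu>) powr (\<alpha> - 1)) + 1 / (1 - (4 ^ \<nu>) powr - \<alpha>)) * \<bar>x - y\<bar> powr \<alpha>"
    unfolding Kfun_eq_saw_series using assms by (intro saw_series_holder) auto
  also have "\<dots> \<le> Cconst \<alpha> \<nu> * \<bar>x - y\<bar> powr \<alpha>"
    using holder_const_le_Cconst[OF assms] by (intro mult_right_mono) auto
  finally show ?thesis .
qed

lemma abs_tm: "\<bar>tm \<nu> m x\<bar> = 2 powr (- 2 * real \<nu> * real m - 1)"
proof -
  obtain s where s: "\<bar>s\<bar> = 1 / 2" and tm: "tm \<nu> m x = s / (4 ^ \<nu>) ^ m"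
    using tm_cases by metis
  have "\<bar>tm \<nu> m x\<bar> = \<bar>s\<bar> / (4 ^ \<nu>) ^ m"
    by (simp add: tm abs_divide)
  also have "\<dots> = 2 powr (- 2 * real \<nu> * real m) / 2"
    unfolding s two_powr_eq_inverse_four_pow by simp
  also have "\<dots> = 2 powr (- 2 * real \<nu> * real m - 1)"
    by (simp add: powr_diff)
  finally show ?thesis .
qed

lemma tm_tendsto_zero:
  assumes "1 \<le> \<nu>"
  shows "(\<lambda>m. tm \<nu> m x) \<longlonglongrightarrow> 0"
proof (rule Lim_null_comparison)
  have "\<bar>tm \<nu> m x\<bar> \<le> 2 powr (- 2 * real \<nu> * real m)" for m
    unfolding abs_tm by (intro powr_mono) auto
  then show "\<forall>\<^sub>F m in sequentially. norm (tm \<nu> m x) \<le> inverse ((4 ^ \<nu>) ^ m)"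
    unfolding two_powr_eq_inverse_four_pow by (simp add: divide_inverse)
  show "(\<lambda>m. inverse (((4::real) ^ \<nu>) ^ m)) \<longlonglongrightarrow> 0"
    using assms by (intro LIMSEQ_inverse_realpow_zero) (simp add: one_less_power)
qed

lemma Kconst_mult_powr:
  fixes m \<nu> :: nat and \<alpha> \<beta> :: real
  defines "Q \<equiv> 2 powr (2 * real \<nu> * (1 - \<alpha>))" and "T \<equiv> 2 powr (- 2 * real \<nu> * real m - 1)"
  shows "Kconst m \<nu> \<alpha> \<beta> * T powr \<beta> = T * (Q ^ m * (Q - 2) / (Q - 1))"
proof -
  have "2 powr (\<beta> - 1) * (2 powr (2 * real \<nu> * (\<beta> - \<alpha>))) ^ m * T powr \<beta>
      = 2 powr (\<beta> - 1 + real m * (2 * real \<nu> * (\<beta> - \<alpha>)) + (- 2 * real \<nu> * real m - 1) * \<beta>)"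
    by (simp add: T_def powr_power powr_powr powr_add)
  also have "\<dots> = 2 powr ((- 2 * real \<nu> * real m - 1) + real m * (2 * real \<nu> * (1 - \<alpha>)))"
    by (simp add: algebra_simps)
  also have "\<dots> = T * Q ^ m"
    by (simp add: T_def Q_def powr_power powr_add)
  finally show ?thesis
    unfolding Kconst_def Q_def[symmetric] by (simp add: algebra_simps)
qed

lemma Kfun_increment_ratio_ge:
  assumes "0 < \<alpha>" "\<alpha> < 1" "1 \<le> \<nu>"
  shows "Kconst m \<nu> \<alpha> \<beta> \<le> \<bar>Kfun \<alpha> \<nu> (x + tm \<nu> m x) - Kfun \<alpha> \<nu> x\<bar> / \<bar>tm \<nu> m x\<bar> powr \<beta>"
proof -
  define Q where "Q = 2 powr (2 * real \<nu> * (1 - \<alpha>))"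
  define T where "T = 2 powr (- 2 * real \<nu> * real m - 1)"
  obtain i s where s: "\<bar>s\<bar> = 1 / 2" and tm: "tm \<nu> m x = s / (4 ^ \<nu>) ^ m"
    and "of_int i \<le> (4 ^ \<nu>) ^ m * x" "(4 ^ \<nu>) ^ m * x \<le> of_int i + 1"
    and "of_int i \<le> (4 ^ \<nu>) ^ m * x + s" "(4 ^ \<nu>) ^ m * x + s \<le> of_int i + 1"
    by (rule tm_cases)
  moreover have "(4 ^ \<nu>) powr - \<alpha> < 1"
    unfolding four_pow_powr_uminus using assms by (intro powr_less_one) auto
  ultimately have "\<bar>s\<bar> / (4 ^ \<nu>) ^ m * (((4 ^ \<nu>) powr - \<alpha> * 4 ^ \<nu>) ^ m - (\<Sum>k<m. ((4 ^ \<nu>) powr - \<alpha> * 4 ^ \<nu>) ^ k))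
      \<le> \<bar>Kfun \<alpha> \<nu> (x + tm \<nu> m x) - Kfun \<alpha> \<nu> x\<bar>"
    using saw_series_increment_ge[of "4 ^ \<nu>" "(4 ^ \<nu>) powr - \<alpha>" s i m x] assms
    by (simp add: Kfun_eq_saw_series)
  moreover have "(4 ^ \<nu>) powr - \<alpha> * 4 ^ \<nu> = Q"
    using powr_add[of "4 ^ \<nu>" "- \<alpha>" 1] by (simp add: Q_def four_pow_powr)
  moreover have "\<bar>s\<bar> / (4 ^ \<nu>) ^ m = T"
    using abs_tm[of \<nu> m x] by (simp add: tm T_def abs_divide)
  ultimately have "T * (Q ^ m - (\<Sum>k<m. Q ^ k)) \<le> \<bar>Kfun \<alpha> \<nu> (x + tm \<nu> m x) - Kfun \<alpha> \<nu> x\<bar>"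
    by simp
  moreover have "T * (Q ^ m * (Q - 2) / (Q - 1)) \<le> T * (Q ^ m - (\<Sum>k<m. Q ^ k))"
    using assms by (intro mult_left_mono geometric_sum_lower) (auto simp: Q_def T_def)
  ultimately have "Kconst m \<nu> \<alpha> \<beta> * T powr \<beta> \<le> \<bar>Kfun \<alpha> \<nu> (x + tm \<nu> m x) - Kfun \<alpha> \<nu> x\<bar>"
    unfolding Kconst_mult_powr Q_def T_def by linarith
  then show ?thesis
    by (simp add: abs_tm T_def pos_le_divide_eq)
qed

lemma Kfun_not_holder_at:
  assumes "0 < \<alpha>" "\<alpha> < 1" "\<alpha> < \<beta>" "1 \<le> \<nu>" "1 / (1 - \<alpha>) < 2 * real \<nu>"
  shows "\<not> holder_at (Kfun \<alpha> \<nu>) \<beta> x"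
proof -
  define Q where "Q = 2 powr (2 * real \<nu> * (1 - \<alpha>))"
  have "1 < 2 * real \<nu> * (1 - \<alpha>)"
    using assms(2,5) by (simp add: field_simps)
  then have "2 powr 1 < Q"
    unfolding Q_def by (rule powr_less_mono) simp
  then have "0 < 2 powr (\<beta> - 1) * (Q - 2) / (Q - 1)"
    by simp
  moreover have "1 < 2 powr (2 * real \<nu> * (\<beta> - \<alpha>))"
    using powr_less_mono[of 0 "2 * real \<nu> * (\<beta> - \<alpha>)" 2] assms(3,4) by simp
  ultimately show ?thesis
  proof (rule not_holder_at_if_ratio_unbounded[where t = "\<lambda>m. tm \<nu> m x", rotated 2])
    show "(\<lambda>m. tm \<nu> m x) \<longlonglongrightarrow> 0"
      by (rule tm_tendsto_zero[OF assms(4)])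
    show "tm \<nu> m x \<noteq> 0" for m
      using abs_tm[of \<nu> m x] by auto
    show "2 powr (\<beta> - 1) * (Q - 2) / (Q - 1) * (2 powr (2 * real \<nu> * (\<beta> - \<alpha>))) ^ m
        \<le> \<bar>Kfun \<alpha> \<nu> (x + tm \<nu> m x) - Kfun \<alpha> \<nu> x\<bar> / \<bar>tm \<nu> m x\<bar> powr \<beta>" for m
      using Kfun_increment_ratio_ge[OF assms(1,2,4), of m \<beta> x] unfolding Kconst_def Q_def .
  qed
qed

theorem theorem1:
  fixes \<alpha> :: real and \<nu> :: nat
  assumes "0 < \<alpha>" "\<alpha> < 1" "\<nu> \<ge> 1"
  shows "continuous_on UNIV (Kfun \<alpha> \<nu>)
    \<and> (\<exists>C. \<forall>x y. \<bar>Kfun \<alpha> \<nu> x - Kfun \<alpha> \<nu> y\<bar> \<le> C * \<bar>x - y\<bar> powr \<alpha>)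
    \<and> (\<forall>x. 0 \<le> Kfun \<alpha> \<nu> x \<and> Kfun \<alpha> \<nu> x \<le> 1 / (1 - 2 powr (- 2 * real \<nu> * \<alpha>)))
    \<and> (\<forall>x y. \<bar>x - y\<bar> \<le> 2 \<longrightarrow>
          \<bar>Kfun \<alpha> \<nu> x - Kfun \<alpha> \<nu> y\<bar> \<le> Cconst \<alpha> \<nu> * \<bar>x - y\<bar> powr \<alpha>)
    \<and> (2 * real \<nu> > 1 / (1 - \<alpha>) \<longrightarrow>
          (\<forall>x \<beta>. \<alpha> < \<beta> \<and> \<beta> \<le> 1 \<longrightarrow> \<not> holder_at (Kfun \<alpha> \<nu>) \<beta> x)
        \<and> (\<forall>x m \<beta>. \<alpha> < \<beta> \<and> \<beta> \<le> 1 \<longrightarrow>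
             \<bar>Kfun \<alpha> \<nu> (x + tm \<nu> m x) - Kfun \<alpha> \<nu> x\<bar> / \<bar>tm \<nu> m x\<bar> powr \<beta>
               \<ge> Kconst m \<nu> \<alpha> \<beta>))"
proof -
  have holder: "\<And>x y. \<bar>Kfun \<alpha> \<nu> x - Kfun \<alpha> \<nu> y\<bar> \<le> Cconst \<alpha> \<nu> * \<bar>x - y\<bar> powr \<alpha>"
    using Kfun_holder[OF assms] .
  show ?thesis
    using continuous_on_if_holder[OF assms(1) holder] holder Kfun_bounds[OF assms(1,3)]
      Kfun_not_holder_at[OF assms(1,2) _ assms(3)] Kfun_increment_ratio_ge[OF assms]
    by blast
qed

end
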